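(* For all integers $m \geq 3$ and $n \geq 1$, $s_{n,m}(112,122)=2^{n-1}$.
   Context: For positive integers $n,m$, $[n]_m$ denotes the regular multiset $\{1^m,2^m,\ldots,n^m\}$ (each element of $[n]=\{1,\dots,n\}$ occurs exactly $m$ times), and a permutation of $[n]_m$ is a sequence of length $nm$ in which each $i\in[n]$ appears exactly $m$ times. A sequence $\sigma=\sigma_1\cdots\sigma_L$ of integers contains a pattern $\pi=\pi_1\cdots\pi_k$ (a sequence of positive integers, possibly with repeated letters) if there are indices $i_1<\dots<i_k$ such that for all $a,b$: $\sigma_{i_a}<\sigma_{i_b}\iff \pi_a<\pi_b$ and $\sigma_{i_a}=\sigma_{i_b}\iff\pi_a=\pi_b$ (i.e. the subsequence is order-isomorphic to $\pi$); otherwise $\sigma$ avoids $\pi$. For a set of patterns $\Pi$, $s_{n,m}(\Pi)$ is the number of permutations of $[n]_m$ avoiding every pattern in $\Pi$. *)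

theory Defs
  imports Main
begin

definition multiset_perms :: "nat \<Rightarrow> nat \<Rightarrow> nat list set" where
  "multiset_perms n m =
     {w. set w \<subseteq> {1..n} \<and> (\<forall>i\<in>{1..n}. count_list w i = m)}"

definition contains_pattern :: "nat list \<Rightarrow> nat list \<Rightarrow> bool" where
  "contains_pattern \<sigma> \<pi> \<longleftrightarrow>
     (\<exists>idx :: nat \<Rightarrow> nat.
        (\<forall>a b. a < b \<and> b < length \<pi> \<longrightarrow> idx a < idx b) \<and>
        (\<forall>a < length \<pi>. idx a < length \<sigma>) \<and>
        (\<forall>a < length \<pi>. \<forall>b < length \<pi>.
            (\<sigma> ! idx a < \<sigma> ! idx b \<longleftrightarrow> \<pi> ! a < \<pi> ! b) \<and>
            (\<sigma> ! idx a = \<sigma> ! idx b \<longleftrightarrow> \<pi> ! a = \<pi> ! b)))"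

definition avoids :: "nat list \<Rightarrow> nat list \<Rightarrow> bool" where
  "avoids \<sigma> \<pi> \<longleftrightarrow> \<not> contains_pattern \<sigma> \<pi>"

definition s_count :: "nat \<Rightarrow> nat \<Rightarrow> nat list set \<Rightarrow> nat" where
  "s_count n m \<Pi> = card {\<sigma> \<in> multiset_perms n m. \<forall>\<pi>\<in>\<Pi>. avoids \<sigma> \<pi>}"

end

theory Submission
  imports Defs "HOL-Library.Sublist"
begin

text \<open>A permutation of \<open>[n]\<^sub>m\<close> avoiding 112 and 122 begins with \<open>m - 1\<close> copies of \<open>n\<close>:
  otherwise a smaller letter would be followed by two copies of \<open>n\<close>. For the largest letter
  \<open>N = n + 1\<close>, deleting all copies of \<open>N\<close> leaves an avoider \<open>v\<close> of \<open>[n]\<^sub>m\<close>, and the last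
  copy of \<open>N\<close> can only stand before \<open>v\<close> or right after its first letter: for \<open>m \<ge> 3\<close> the
  first two letters of \<open>v\<close> are \<open>n\<close>, and \<open>N\<close> after them would complete \<open>n n N\<close>. Both
  placements avoid the patterns, so the count doubles with each new letter.\<close>

lemma subseq_Cons_iff_nth:
  "subseq (x # xs) ys \<longleftrightarrow> (\<exists>j<length ys. ys ! j = x \<and> subseq xs (drop (Suc j) ys))"
proof
  assume "subseq (x # xs) ys"
  then obtain us vs where "ys = us @ x # vs" "subseq xs vs"
    using list_emb_ConsD by fastforce
  then show "\<exists>j<length ys. ys ! j = x \<and> subseq xs (drop (Suc j) ys)"
    by (intro exI[of _ "length us"]) auto
next
  assume "\<exists>j<length ys. ys ! j = x \<and> subseq xs (drop (Suc j) ys)"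
  then obtain j where j: "j < length ys" "ys ! j = x" "subseq xs (drop (Suc j) ys)"
    by blast
  have "subseq (x # xs) (take j ys @ x # drop (Suc j) ys)"
    using j(3) by (intro list_emb_append2) auto
  moreover have "ys = take j ys @ ys ! j # drop (Suc j) ys"
    using j(1) by (rule id_take_nth_drop)
  ultimately show "subseq (x # xs) ys"
    using j(2) by simp
qed

lemma subseq_iff_strict_mono_indices:
  "subseq xs ys \<longleftrightarrow>
     (\<exists>idx. (\<forall>a b. a < b \<and> b < length xs \<longrightarrow> idx a < idx b) \<and>
            (\<forall>a<length xs. idx a < length ys \<and> ys ! idx a = xs ! a))"
proof (induction xs arbitrary: ys)
  case Nil
  then show ?case by simp
next
  case (Cons x xs)
  show ?case
  proof
    assume "subseq (x # xs) ys"
    then obtain j where j: "j < length ys" "ys ! j = x" "subseq xs (drop (Suc j) ys)"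
      unfolding subseq_Cons_iff_nth by blast
    then obtain idx where mono: "\<forall>a b. a < b \<and> b < length xs \<longrightarrow> idx a < idx b"
      and idx: "\<forall>a<length xs. idx a < length (drop (Suc j) ys) \<and> drop (Suc j) ys ! idx a = xs ! a"
      using Cons.IH by blast
    show "\<exists>idx. (\<forall>a b. a < b \<and> b < length (x # xs) \<longrightarrow> idx a < idx b) \<and>
            (\<forall>a<length (x # xs). idx a < length ys \<and> ys ! idx a = (x # xs) ! a)"
    proof (intro exI[of _ "case_nat j (\<lambda>a. Suc j + idx a)"] conjI allI impI)
      fix a b assume "a < b \<and> b < length (x # xs)"
      then show "case_nat j (\<lambda>a. Suc j + idx a) a < case_nat j (\<lambda>a. Suc j + idx a) b"
        using mono by (cases a; cases b) auto
    next
      fix a assume "a < length (x # xs)"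
      then show "case_nat j (\<lambda>a. Suc j + idx a) a < length ys"
        and "ys ! case_nat j (\<lambda>a. Suc j + idx a) a = (x # xs) ! a"
        using j idx by (cases a; auto)+
    qed
  next
    assume "\<exists>idx. (\<forall>a b. a < b \<and> b < length (x # xs) \<longrightarrow> idx a < idx b) \<and>
            (\<forall>a<length (x # xs). idx a < length ys \<and> ys ! idx a = (x # xs) ! a)"
    then obtain idx where mono: "\<forall>a b. a < b \<and> b < Suc (length xs) \<longrightarrow> idx a < idx b"
      and idx: "\<forall>a<Suc (length xs). idx a < length ys \<and> ys ! idx a = (x # xs) ! a"
      by auto
    have "subseq xs (drop (Suc (idx 0)) ys)"
      unfolding Cons.IH
    proof (intro exI[of _ "\<lambda>a. idx (Suc a) - Suc (idx 0)"] conjI allI impI)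
      fix a b assume "a < b \<and> b < length xs"
      then have "idx 0 < idx (Suc a)" "idx (Suc a) < idx (Suc b)"
        using mono by auto
      then show "idx (Suc a) - Suc (idx 0) < idx (Suc b) - Suc (idx 0)"
        by linarith
    next
      fix a assume a: "a < length xs"
      have "idx 0 < idx (Suc a)" using mono a by auto
      then show "idx (Suc a) - Suc (idx 0) < length (drop (Suc (idx 0)) ys)"
        and "drop (Suc (idx 0)) ys ! (idx (Suc a) - Suc (idx 0)) = xs ! a"
        using idx a by auto
    qed
    then show "subseq (x # xs) ys"
      unfolding subseq_Cons_iff_nth using idx by (intro exI[of _ "idx 0"]) auto
  qed
qed

lemma set_mono_subseq: "subseq xs ys \<Longrightarrow> set xs \<subseteq> set ys"
  by (auto elim: list_emb_set)

lemma subseq_replicate_if_le_count: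
  "k \<le> count_list xs x \<Longrightarrow> subseq (replicate k x) xs"
proof (induction xs arbitrary: k)
  case (Cons y xs)
  then show ?case
    using Cons.IH[of k] by (cases k) (auto split: if_splits)
qed simp

lemma count_list_replicate [simp]:
  "count_list (replicate k x) y = (if x = y then k else 0)"
  by (induction k) auto

lemma count_list_removeAll [simp]:
  "count_list (removeAll x xs) y = (if x = y then 0 else count_list xs y)"
  by (induction xs) auto

definition order_isomorphic :: "'a::linorder list \<Rightarrow> 'a list \<Rightarrow> bool" where
  "order_isomorphic xs ys \<longleftrightarrow> length xs = length ys \<and>
     (\<forall>a<length ys. \<forall>b<length ys.
        (xs ! a < xs ! b \<longleftrightarrow> ys ! a < ys ! b) \<and> (xs ! a = xs ! b \<longleftrightarrow> ys ! a = ys ! b))"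

lemma contains_pattern_iff_subseq:
  "contains_pattern \<sigma> \<pi> \<longleftrightarrow> (\<exists>xs. subseq xs \<sigma> \<and> order_isomorphic xs \<pi>)"
proof
  assume "contains_pattern \<sigma> \<pi>"
  then obtain idx where mono: "\<forall>a b. a < b \<and> b < length \<pi> \<longrightarrow> idx a < idx b"
    and bound: "\<forall>a<length \<pi>. idx a < length \<sigma>"
    and iso: "\<forall>a<length \<pi>. \<forall>b<length \<pi>.
            (\<sigma> ! idx a < \<sigma> ! idx b \<longleftrightarrow> \<pi> ! a < \<pi> ! b) \<and> (\<sigma> ! idx a = \<sigma> ! idx b \<longleftrightarrow> \<pi> ! a = \<pi> ! b)"
    unfolding contains_pattern_def by blast
  define xs where "xs = map (\<lambda>a. \<sigma> ! idx a) [0..<length \<pi>]"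
  have "subseq xs \<sigma>"
    unfolding subseq_iff_strict_mono_indices using mono bound by (auto simp: xs_def)
  moreover have "order_isomorphic xs \<pi>"
    using iso by (simp add: order_isomorphic_def xs_def)
  ultimately show "\<exists>xs. subseq xs \<sigma> \<and> order_isomorphic xs \<pi>" by blast
next
  assume "\<exists>xs. subseq xs \<sigma> \<and> order_isomorphic xs \<pi>"
  then obtain xs idx where iso: "order_isomorphic xs \<pi>"
    and mono: "\<forall>a b. a < b \<and> b < length xs \<longrightarrow> idx a < idx b"
    and idx: "\<forall>a<length xs. idx a < length \<sigma> \<and> \<sigma> ! idx a = xs ! a"
    unfolding subseq_iff_strict_mono_indices by blast
  then show "contains_pattern \<sigma> \<pi>"
    unfolding contains_pattern_def order_isomorphic_def by (intro exI[of _ idx]) auto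
qed

lemma order_isomorphic_3_iff:
  "order_isomorphic [x, y, z] [p, q, r] \<longleftrightarrow>
     (x < y \<longleftrightarrow> p < q) \<and> (x = y \<longleftrightarrow> p = q) \<and> (y < x \<longleftrightarrow> q < p) \<and>
     (x < z \<longleftrightarrow> p < r) \<and> (x = z \<longleftrightarrow> p = r) \<and> (z < x \<longleftrightarrow> r < p) \<and>
     (y < z \<longleftrightarrow> q < r) \<and> (y = z \<longleftrightarrow> q = r) \<and> (z < y \<longleftrightarrow> r < q)"
  unfolding order_isomorphic_def by (auto simp: less_Suc_eq numeral_3_eq_3)

lemma order_isomorphic_112:
  "order_isomorphic xs [1, 1, 2::nat] \<longleftrightarrow> (\<exists>a b. a < b \<and> xs = [a, a, b])"
proof
  assume iso: "order_isomorphic xs [1, 1, 2]"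
  then obtain x y z where "xs = [x, y, z]"
    unfolding order_isomorphic_def by (auto simp: length_Suc_conv)
  with iso show "\<exists>a b. a < b \<and> xs = [a, a, b]"
    by (auto simp: order_isomorphic_3_iff)
qed (auto simp: order_isomorphic_3_iff)

lemma order_isomorphic_122:
  "order_isomorphic xs [1, 2, 2::nat] \<longleftrightarrow> (\<exists>a b. a < b \<and> xs = [a, b, b])"
proof
  assume iso: "order_isomorphic xs [1, 2, 2]"
  then obtain x y z where "xs = [x, y, z]"
    unfolding order_isomorphic_def by (auto simp: length_Suc_conv)
  with iso show "\<exists>a b. a < b \<and> xs = [a, b, b]"
    by (auto simp: order_isomorphic_3_iff)
qed (auto simp: order_isomorphic_3_iff)

definition contains_112_122 :: "nat list \<Rightarrow> bool" where
  "contains_112_122 w \<longleftrightarrow> (\<exists>a b. a < b \<and> (subseq [a, a, b] w \<or> subseq [a, b, b] w))"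

lemma contains_112_122_subseq_mono:
  "subseq v w \<Longrightarrow> contains_112_122 v \<Longrightarrow> contains_112_122 w"
  unfolding contains_112_122_def by (meson subseq_order.trans)

lemma contains_112_122_Cons_max:
  assumes "\<forall>x\<in>set w. x \<le> N"
  shows "contains_112_122 (N # w) \<longleftrightarrow> contains_112_122 w"
proof
  assume "contains_112_122 (N # w)"
  then obtain a b where ab: "a < b" "subseq [a, a, b] (N # w) \<or> subseq [a, b, b] (N # w)"
    unfolding contains_112_122_def by blast
  then have "b \<in> set (N # w)"
    using set_mono_subseq[of "[a, a, b]" "N # w"] set_mono_subseq[of "[a, b, b]" "N # w"] by auto
  with ab(1) assms have "a \<noteq> N"
    by auto
  with ab show "contains_112_122 w"
    unfolding contains_112_122_def by auto
qed (auto elim!: contains_112_122_subseq_mono[rotated] intro: list_emb_Cons)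

lemma contains_112_122_replicate_max:
  assumes "\<forall>x\<in>set w. x \<le> N"
  shows "contains_112_122 (replicate k N @ w) \<longleftrightarrow> contains_112_122 w"
  using assms by (induction k) (simp_all add: contains_112_122_Cons_max set_replicate_conv_if)

lemma contains_112_122_insert_max:
  assumes "\<forall>x\<in>set (h # t). x < N"
  shows "contains_112_122 (h # N # t) \<longleftrightarrow> contains_112_122 (h # t)"
proof
  assume "contains_112_122 (h # N # t)"
  then obtain a b where ab: "a < b" "subseq [a, a, b] (h # N # t) \<or> subseq [a, b, b] (h # N # t)"
    unfolding contains_112_122_def by blast
  then have "b \<in> set (h # N # t)"
    using set_mono_subseq[of "[a, a, b]" "h # N # t"] set_mono_subseq[of "[a, b, b]" "h # N # t"]
    by auto
  then have "b \<le> N"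
    using assms by auto
  have "h \<noteq> N" "N \<notin> set t"
    using assms by auto
  have "subseq [a, a, b] (h # t) \<or> subseq [a, b, b] (h # t)"
  proof (cases "a = h")
    case True
    with ab \<open>h \<noteq> N\<close> \<open>N \<notin> set t\<close> show ?thesis
      by (auto simp: subseq_singleton_left split: if_splits)
  next
    case False
    with ab(1) \<open>b \<le> N\<close> have "a \<noteq> N"
      by auto
    with False ab(2) show ?thesis
      by auto
  qed
  with ab(1) show "contains_112_122 (h # t)"
    unfolding contains_112_122_def by blast
qed (auto elim!: contains_112_122_subseq_mono[rotated] intro: list_emb_Cons)

lemma avoids_112_122_iff:
  "(\<forall>\<pi>\<in>{[1, 1, 2], [1, 2, 2]}. avoids \<sigma> \<pi>) \<longleftrightarrow> \<not> contains_112_122 \<sigma>"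
proof -
  have "avoids \<sigma> [1, 1, 2] \<longleftrightarrow> \<not> (\<exists>a b. a < b \<and> subseq [a, a, b] \<sigma>)"
    unfolding avoids_def contains_pattern_iff_subseq order_isomorphic_112 by blast
  moreover have "avoids \<sigma> [1, 2, 2] \<longleftrightarrow> \<not> (\<exists>a b. a < b \<and> subseq [a, b, b] \<sigma>)"
    unfolding avoids_def contains_pattern_iff_subseq order_isomorphic_122 by blast
  ultimately show ?thesis
    unfolding contains_112_122_def by auto
qed

lemma finite_multiset_perms: "finite (multiset_perms n m)"
proof (rule finite_subset)
  show "multiset_perms n m \<subseteq> {w. set w \<subseteq> {1..n} \<and> length w = n * m}"
  proof
    fix w assume "w \<in> multiset_perms n m"
    then have w: "set w \<subseteq> {1..n}" "\<forall>i\<in>{1..n}. count_list w i = m"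
      unfolding multiset_perms_def by auto
    have "length w = (\<Sum>i\<in>{1..n}. count_list w i)"
      using sum_count_set[OF w(1)] by simp
    also have "\<dots> = n * m"
      using w(2) by simp
    finally show "w \<in> {w. set w \<subseteq> {1..n} \<and> length w = n * m}"
      using w(1) by simp
  qed
qed (rule finite_lists_length_eq, simp)

lemma multiset_perms_nonempty:
  "v \<in> multiset_perms n m \<Longrightarrow> 1 \<le> n \<Longrightarrow> 1 \<le> m \<Longrightarrow> v \<noteq> []"
  unfolding multiset_perms_def by force

lemma multiset_perms_Suc_iff:
  assumes "\<And>i. i \<noteq> Suc n \<Longrightarrow> count_list u i = count_list v i" and "Suc n \<notin> set v"
  shows "u \<in> multiset_perms (Suc n) m \<longleftrightarrow> v \<in> multiset_perms n m \<and> count_list u (Suc n) = m"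
proof -
  have "x \<in> set u - {Suc n} \<longleftrightarrow> x \<in> set v" for x
    using assms count_list_0_iff[of u x] count_list_0_iff[of v x] by (cases "x = Suc n") auto
  then have "set u - {Suc n} = set v"
    by blast
  moreover have "{1..Suc n} = insert (Suc n) {1..n}"
    by auto
  ultimately have "set u \<subseteq> {1..Suc n} \<longleftrightarrow> set v \<subseteq> {1..n}"
    by blast
  moreover have "(\<forall>i\<in>{1..Suc n}. count_list u i = m) \<longleftrightarrow>
      (\<forall>i\<in>{1..n}. count_list v i = m) \<and> count_list u (Suc n) = m"
    using assms(1) by (auto simp: atLeastAtMostSuc_conv)
  ultimately show ?thesis
    unfolding multiset_perms_def by auto
qed

definition avoiders :: "nat \<Rightarrow> nat \<Rightarrow> nat list set" where
  "avoiders n m = {w \<in> multiset_perms n m. \<not> contains_112_122 w}"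

lemma avoiders_prefix:
  assumes "w \<in> avoiders n m" and "1 \<le> n"
  shows "\<exists>r. w = replicate (m - 1) n @ r"
proof -
  define k where "k = length (takeWhile ((=) n) w)"
  define r where "r = dropWhile ((=) n) w"
  have "takeWhile ((=) n) w = replicate k n"
    unfolding k_def by (metis (full_types) replicate_length_same set_takeWhileD)
  then have w: "w = replicate k n @ r"
    unfolding r_def by (metis takeWhile_dropWhile_id)
  have perm: "set w \<subseteq> {1..n}" "count_list w n = m" and avoid: "\<not> contains_112_122 w"
    using assms unfolding avoiders_def multiset_perms_def by auto
  show ?thesis
  proof (cases "m - 1 \<le> k")
    case True
    then have "w = replicate (m - 1) n @ replicate (k - (m - 1)) n @ r"
      using w by (simp flip: replicate_add)
    then show ?thesis ..
  next
    case False
    have "count_list r n = m - k"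
      using w perm(2) by simp
    then obtain x t where r: "r = x # t"
      using False by (cases r) auto
    have "x \<noteq> n"
      using hd_dropWhile[of "(=) n" w] r unfolding r_def by auto
    moreover have "x \<in> set w"
      using w r by simp
    ultimately have "x < n"
      using perm(1) by fastforce
    have "2 \<le> count_list t n"
      using \<open>count_list r n = m - k\<close> r \<open>x \<noteq> n\<close> False by simp
    then have "subseq [n, n] t"
      using subseq_replicate_if_le_count[of 2 t n] by (simp add: numeral_2_eq_2)
    then have "subseq [x, n, n] w"
      unfolding w r by (intro list_emb_append2) simp
    with \<open>x < n\<close> avoid show ?thesis
      unfolding contains_112_122_def by blast
  qed
qed

definition top_block :: "nat \<Rightarrow> nat \<Rightarrow> nat list \<Rightarrow> nat list" where
  "top_block m N v = replicate m N @ v"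

definition top_block_split :: "nat \<Rightarrow> nat \<Rightarrow> nat list \<Rightarrow> nat list" where
  "top_block_split m N v = replicate (m - 1) N @ hd v # N # tl v"

lemma top_block_in_avoiders:
  assumes "v \<in> avoiders n m"
  shows "top_block m (Suc n) v \<in> avoiders (Suc n) m"
proof -
  have v: "set v \<subseteq> {1..n}" "v \<in> multiset_perms n m" "\<not> contains_112_122 v"
    using assms unfolding avoiders_def multiset_perms_def by auto
  then have "Suc n \<notin> set v" "\<forall>x\<in>set v. x \<le> Suc n"
    by auto
  with v show ?thesis
    unfolding avoiders_def top_block_def
    by (simp add: multiset_perms_Suc_iff[where v = v] contains_112_122_replicate_max)
qed

lemma top_block_split_in_avoiders:
  assumes "v \<in> avoiders n m" and "1 \<le> n" and "1 \<le> m"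
  shows "top_block_split m (Suc n) v \<in> avoiders (Suc n) m"
proof -
  have v: "set v \<subseteq> {1..n}" "v \<in> multiset_perms n m" "\<not> contains_112_122 v"
    using assms(1) unfolding avoiders_def multiset_perms_def by auto
  then obtain h t where ht: "v = h # t"
    using multiset_perms_nonempty assms(2,3) by (cases v) auto
  have below: "\<forall>x\<in>set (h # t). x < Suc n"
    using v(1) ht by auto
  then have "\<not> contains_112_122 (h # Suc n # t)"
    using v(3) ht by (simp add: contains_112_122_insert_max)
  moreover have "\<forall>x\<in>set (h # Suc n # t). x \<le> Suc n"
    using below by auto
  moreover have "top_block_split m (Suc n) v \<in> multiset_perms (Suc n) m"
    using v(2) below assms(3) unfolding top_block_split_def ht
    by (subst multiset_perms_Suc_iff[where v = "h # t"]) auto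
  ultimately show ?thesis
    unfolding avoiders_def top_block_split_def ht
    by (simp add: contains_112_122_replicate_max)
qed

lemma removeAll_top_in_avoiders:
  assumes "w \<in> avoiders (Suc n) m"
  shows "removeAll (Suc n) w \<in> avoiders n m"
proof -
  have "subseq (removeAll (Suc n) w) w"
    by (simp add: removeAll_filter_not_eq)
  with assms show ?thesis
    unfolding avoiders_def
    by (auto simp: multiset_perms_Suc_iff[where u = w and v = "removeAll (Suc n) w"]
        intro: contains_112_122_subseq_mono)
qed

lemma avoiders_Suc_decompose:
  assumes "w \<in> avoiders (Suc n) m" and "1 \<le> m"
  obtains p q where "w = replicate (m - 1) (Suc n) @ p @ Suc n # q" and "p @ q \<in> avoiders n m"
proof -
  let ?N = "Suc n"
  obtain r where w: "w = replicate (m - 1) ?N @ r"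
    using avoiders_prefix[OF assms(1)] by auto
  have "count_list w ?N = m"
    using assms(1) unfolding avoiders_def multiset_perms_def by auto
  then have "count_list r ?N = Suc 0"
    using w assms(2) by simp
  then obtain p q where r: "r = p @ ?N # q" and "?N \<notin> set p" "?N \<notin> set q"
    by (metis count_list_Suc_split_first count_list_0_iff)
  moreover have "removeAll ?N (replicate k ?N) = []" for k
    by (induction k) auto
  ultimately have "p @ q \<in> avoiders n m"
    using removeAll_top_in_avoiders[OF assms(1)] w by simp
  with w r show ?thesis
    using that by blast
qed

lemma avoiders_Suc_cases:
  assumes "w \<in> avoiders (Suc n) m" and "1 \<le> n" and "3 \<le> m"
  shows "w \<in> top_block m (Suc n) ` avoiders n m \<union> top_block_split m (Suc n) ` avoiders n m"
proof -
  let ?N = "Suc n"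
  obtain p q where w: "w = replicate (m - 1) ?N @ p @ ?N # q" and v: "p @ q \<in> avoiders n m"
    using avoiders_Suc_decompose[OF assms(1)] assms(3) by auto
  show ?thesis
  proof (cases p)
    case Nil
    have "replicate (m - 1) ?N @ ?N # q = replicate (Suc (m - 1)) ?N @ q"
      by (simp add: replicate_app_Cons_same)
    also have "Suc (m - 1) = m"
      using assms(3) by simp
    finally have "w = top_block m ?N q"
      using w Nil unfolding top_block_def by simp
    with v Nil show ?thesis
      by simp
  next
    case (Cons x p')
    show ?thesis
    proof (cases p')
      case Nil
      then have "w = top_block_split m ?N (p @ q)"
        using w Cons unfolding top_block_split_def by simp
      with v show ?thesis
        by simp
    next
      case (Cons y p'')
      obtain r where "p @ q = replicate (m - 1) n @ r"
        using avoiders_prefix[OF v assms(2)] by auto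
      moreover have "m - 1 = Suc (Suc (m - 3))"
        using assms(3) by simp
      ultimately have "x = n" "y = n"
        using \<open>p = x # p'\<close> Cons by simp_all
      then have "subseq [n, n, ?N] (p @ ?N # q)"
        unfolding \<open>p = x # p'\<close> Cons by (simp add: subseq_singleton_left)
      then have "subseq [n, n, ?N] w"
        unfolding w by (rule list_emb_append2)
      with assms(1) show ?thesis
        unfolding avoiders_def contains_112_122_def by blast
    qed
  qed
qed

lemma avoiders_Suc:
  assumes "1 \<le> n" and "3 \<le> m"
  shows "avoiders (Suc n) m = top_block m (Suc n) ` avoiders n m \<union> top_block_split m (Suc n) ` avoiders n m"
proof
  show "avoiders (Suc n) m \<subseteq> top_block m (Suc n) ` avoiders n m \<union> top_block_split m (Suc n) ` avoiders n m"
    using avoiders_Suc_cases assms by blast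
  show "top_block m (Suc n) ` avoiders n m \<union> top_block_split m (Suc n) ` avoiders n m \<subseteq> avoiders (Suc n) m"
    using top_block_in_avoiders top_block_split_in_avoiders assms by auto
qed

lemma inj_on_top_block_split: "inj_on (top_block_split m N) {v. v \<noteq> []}"
proof (rule inj_onI)
  fix u v assume "u \<in> {v. v \<noteq> []}" "v \<in> {v. v \<noteq> []}"
    and "top_block_split m N u = top_block_split m N v"
  then show "u = v"
    unfolding top_block_split_def by (intro list.expand) auto
qed

lemma top_block_neq_top_block_split:
  assumes "hd u \<noteq> N" and "1 \<le> m"
  shows "top_block m N v \<noteq> top_block_split m N u"
proof -
  obtain k where "m = Suc k"
    using assms(2) by (cases m) auto
  then have "replicate m N = replicate (m - 1) N @ [N]"
    by (simp add: replicate_append_same)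
  with assms(1) show ?thesis
    unfolding top_block_def top_block_split_def by simp
qed

lemma card_avoiders_Suc:
  assumes "1 \<le> n" and "3 \<le> m"
  shows "card (avoiders (Suc n) m) = 2 * card (avoiders n m)"
proof -
  let ?A = "avoiders n m" and ?N = "Suc n"
  have "finite ?A"
    unfolding avoiders_def using finite_multiset_perms by simp
  have nonempty: "?A \<subseteq> {v. v \<noteq> []}"
    using multiset_perms_nonempty[of "[]" n m] assms unfolding avoiders_def by auto
  have "hd u \<noteq> ?N" if "u \<in> ?A" for u
  proof -
    have "hd u \<in> set u"
      using nonempty that by auto
    with that show ?thesis
      unfolding avoiders_def multiset_perms_def by auto
  qed
  then have "top_block m ?N ` ?A \<inter> top_block_split m ?N ` ?A = {}"
    using top_block_neq_top_block_split assms(2) by fastforce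
  moreover have "inj_on (top_block m ?N) ?A"
    by (simp add: top_block_def inj_on_def)
  moreover have "inj_on (top_block_split m ?N) ?A"
    using inj_on_top_block_split nonempty by (rule inj_on_subset)
  ultimately show ?thesis
    using avoiders_Suc[OF assms] \<open>finite ?A\<close>
    by (simp add: card_Un_disjoint card_image)
qed

lemma avoiders_one: "avoiders 1 m = {replicate m 1}"
proof -
  have "multiset_perms 1 m = {replicate m 1}"
  proof (intro equalityI subsetI)
    fix w assume "w \<in> multiset_perms 1 m"
    then have "set w \<subseteq> {1}" and "count_list w 1 = m"
      unfolding multiset_perms_def by auto
    have "w = replicate (length w) 1"
      using \<open>set w \<subseteq> {1}\<close> by (auto intro: replicate_length_same[symmetric])
    moreover have "count_list w 1 = length w"
      using \<open>set w \<subseteq> {1}\<close> by (induction w) auto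
    ultimately show "w \<in> {replicate m 1}"
      using \<open>count_list w 1 = m\<close> by (metis insertI1)
  qed (simp add: multiset_perms_def set_replicate_conv_if)
  moreover have "\<not> contains_112_122 (replicate m 1)"
  proof
    assume "contains_112_122 (replicate m 1)"
    then obtain a b :: nat
      where "a < b" "subseq [a, a, b] (replicate m 1) \<or> subseq [a, b, b] (replicate m 1)"
      unfolding contains_112_122_def by blast
    then have "{a, b} \<subseteq> set (replicate m 1)"
      using set_mono_subseq[of "[a, a, b]" "replicate m 1"] set_mono_subseq[of "[a, b, b]" "replicate m 1"]
      by auto
    with \<open>a < b\<close> show False
      by (simp add: set_replicate_conv_if split: if_splits)
  qed
  ultimately show ?thesis
    unfolding avoiders_def by auto
qed

lemma card_avoiders:
  assumes "1 \<le> n" and "3 \<le> m"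
  shows "card (avoiders n m) = 2 ^ (n - 1)"
  using assms(1)
proof (induction n rule: nat_induct_at_least)
  case base
  then show ?case
    using avoiders_one by simp
next
  case (Suc n)
  then show ?case
    using card_avoiders_Suc assms(2) by (simp add: power_eq_if)
qed

theorem theorem1:
  fixes n m :: nat
  assumes "m \<ge> 3" and "n \<ge> 1"
  shows "s_count n m {[1,1,2], [1,2,2]} = 2 ^ (n - 1)"
proof -
  have "s_count n m {[1,1,2], [1,2,2]} = card (avoiders n m)"
    unfolding s_count_def avoiders_def avoids_112_122_iff ..
  also have "\<dots> = 2 ^ (n - 1)"
    using card_avoiders assms by simp
  finally show ?thesis .
qed

end
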